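(* Let $c\ge1$, let $G$ be a multigraph with vertex set $V(G)=S\cup\mathcal{T}$ where $S\cap\mathcal{T}=\emptyset$ and $\mathcal{T}$ is the terminal set, and let $X\subseteq S$ be connectivity-$c$ linked in $G$. Then $G/X$ is a connectivity-$c$ mimicking network for $(G,\mathcal{T})$.
   Context: For disjoint vertex sets $A,B$, $E_G(A,B)$ is the set of edges with one endpoint in $A$ and the other in $B$; for $Y\subseteq V(G)$, $\partial(Y)=E_G(Y,V(G)\setminus Y)$. $\mathrm{mincut}_G(A,B)$ is the minimum number of edges whose removal leaves no path between $A$ and $B$ ($0$ if either set is empty), and $\mathrm{mincut}^c_G(A,B)=\min\{\mathrm{mincut}_G(A,B),c\}$. A multigraph $H$ is a connectivity-$c$ mimicking network for $(G,\mathcal{T})$ if $V(H)$ contains a copy of each terminal and $\mathrm{mincut}^c_H(A,B)=\mathrm{mincut}^c_G(A,B)$ for all disjoint $A,B\subseteq\mathcal{T}$. A set $X\subseteq S$ is connectivity-$c$ linked in $G$ if for every pair of disjoint sets $A,B$ with $A\cup B=X$ we have $|E_G(A,B)|\ge \min\big(|\partial(A)\cap\partial(X)|,\ |\partial(B)\cap\partial(X)|,\ c\big)$. $G/X$ denotes the multigraph obtained from $G$ by contracting all edges of $G[X]$ (identifying $X$ into a single vertex, deleting self-loops and keeping parallel edges). *)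

theory Defs
  imports Main
begin

text \<open>A finite multigraph: vertex set, a set of edge identifiers, and for each edge
  its set of endpoints (exactly two distinct vertices; parallel edges are distinct
  identifiers with the same endpoints).\<close>
record ('v, 'e) mgraph =
  verts :: "'v set"
  edges :: "'e set"
  ends  :: "'e \<Rightarrow> 'v set"

definition multigraph :: "('v, 'e) mgraph \<Rightarrow> bool" where
  "multigraph G \<longleftrightarrow> finite (verts G) \<and> finite (edges G) \<and>
     (\<forall>e \<in> edges G. ends G e \<subseteq> verts G \<and> card (ends G e) = 2)"

definition edges_between :: "('v, 'e) mgraph \<Rightarrow> 'v set \<Rightarrow> 'v set \<Rightarrow> 'e set" where
  "edges_between G A B = {e \<in> edges G. \<exists>a \<in> A. \<exists>b \<in> B. ends G e = {a, b}}"

definition boundary :: "('v, 'e) mgraph \<Rightarrow> 'v set \<Rightarrow> 'e set" where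
  "boundary G Y = edges_between G Y (verts G - Y)"

definition adj :: "('v, 'e) mgraph \<Rightarrow> 'e set \<Rightarrow> ('v \<times> 'v) set" where
  "adj G F = {(x, y). \<exists>e \<in> F. ends G e = {x, y}}"

definition separates :: "('v, 'e) mgraph \<Rightarrow> 'e set \<Rightarrow> 'v set \<Rightarrow> 'v set \<Rightarrow> bool" where
  "separates G F A B \<longleftrightarrow> \<not> (\<exists>a \<in> A. \<exists>b \<in> B. (a, b) \<in> (adj G (edges G - F))\<^sup>*)"

definition mincut :: "('v, 'e) mgraph \<Rightarrow> 'v set \<Rightarrow> 'v set \<Rightarrow> nat" where
  "mincut G A B = (if A = {} \<or> B = {} then 0
     else (LEAST k. \<exists>F \<subseteq> edges G. card F = k \<and> separates G F A B))"

definition mincut_c :: "nat \<Rightarrow> ('v, 'e) mgraph \<Rightarrow> 'v set \<Rightarrow> 'v set \<Rightarrow> nat" where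
  "mincut_c c G A B = min (mincut G A B) c"

definition mimicking_network ::
  "nat \<Rightarrow> ('v, 'e) mgraph \<Rightarrow> 'v set \<Rightarrow> ('w, 'f) mgraph \<Rightarrow> ('v \<Rightarrow> 'w) \<Rightarrow> bool" where
  "mimicking_network c G T H copy \<longleftrightarrow>
     inj_on copy T \<and> copy ` T \<subseteq> verts H \<and>
     (\<forall>A B. A \<subseteq> T \<longrightarrow> B \<subseteq> T \<longrightarrow> A \<inter> B = {} \<longrightarrow>
        mincut_c c H (copy ` A) (copy ` B) = mincut_c c G A B)"

definition linked :: "nat \<Rightarrow> ('v, 'e) mgraph \<Rightarrow> 'v set \<Rightarrow> bool" where
  "linked c G X \<longleftrightarrow> (\<forall>A B. A \<inter> B = {} \<longrightarrow> A \<union> B = X \<longrightarrow>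
     card (edges_between G A B) \<ge>
       min (card (boundary G A \<inter> boundary G X)) (min (card (boundary G B \<inter> boundary G X)) c))"

text \<open>Contraction G/X: vertices are the blocks {v} (v not in X) and X itself;
  edges of G[X] are deleted (self-loops), all other edges kept (parallel edges kept).\<close>
definition blk :: "'v set \<Rightarrow> 'v \<Rightarrow> 'v set" where
  "blk X v = (if v \<in> X then X else {v})"

definition contract :: "('v, 'e) mgraph \<Rightarrow> 'v set \<Rightarrow> ('v set, 'e) mgraph" where
  "contract G X = \<lparr> verts = blk X ` verts G,
                    edges = {e \<in> edges G. \<not> ends G e \<subseteq> X},
                    ends = (\<lambda>e. blk X ` ends G e) \<rparr>"

end

theory Submission
  imports Defs
begin

text \<open>Contracting X can only make separation harder, since paths of G map to paths of G/X.
  Conversely, a minimum A-B cut of G of size below c is the boundary of some set Y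
  containing A and avoiding B. Linkedness of X, applied to the split of X into X \<inter> Y and X - Y,
  shows that one of Y - X and Y \<union> X has no larger boundary; neither splits X, so its boundary
  survives unchanged in G/X and separates the terminals there.\<close>

lemma edges_between_sym: "edges_between G A B = edges_between G B A"
  unfolding edges_between_def by (auto simp: insert_commute)

lemma boundary_compl:
  assumes "Y \<subseteq> verts G"
  shows "boundary G (verts G - Y) = boundary G Y"
  using assms unfolding boundary_def by (simp add: Diff_Diff_Int Int_absorb1 edges_between_sym)

lemma edges_between_split_subset_boundary:
  "X \<subseteq> verts G \<Longrightarrow> edges_between G (X \<inter> Y) (X - Y) \<subseteq> boundary G Y"
  unfolding boundary_def edges_between_def by blast

lemma finite_boundary: "finite (edges G) \<Longrightarrow> finite (boundary G Y)"
  unfolding boundary_def edges_between_def by auto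

lemma separates_edges: "A \<inter> B = {} \<Longrightarrow> separates G (edges G) A B"
  unfolding separates_def adj_def by auto

lemma mincut_le_card: "F \<subseteq> edges G \<Longrightarrow> separates G F A B \<Longrightarrow> mincut G A B \<le> card F"
  unfolding mincut_def by (auto intro: Least_le)

lemma mincut_obtain:
  assumes "A \<noteq> {}" "B \<noteq> {}" "A \<inter> B = {}"
  obtains F where "F \<subseteq> edges G" "card F = mincut G A B" "separates G F A B"
proof -
  have "\<exists>F \<subseteq> edges G. card F = card (edges G) \<and> separates G F A B"
    using separates_edges[OF assms(3)] by blast
  then have "\<exists>F \<subseteq> edges G. card F = (LEAST k. \<exists>F \<subseteq> edges G. card F = k \<and> separates G F A B)
      \<and> separates G F A B"
    by (rule LeastI)
  with assms that show ?thesis unfolding mincut_def by auto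
qed

lemma separates_obtain_boundary:
  assumes "separates G F A B" "A \<subseteq> verts G"
  obtains Y where "Y \<subseteq> verts G" "A \<subseteq> Y" "Y \<inter> B = {}" "boundary G Y \<subseteq> F"
proof -
  let ?R = "(adj G (edges G - F))\<^sup>*"
  define Y where "Y = {v \<in> verts G. \<exists>a \<in> A. (a, v) \<in> ?R}"
  have "boundary G Y \<subseteq> F"
  proof
    fix e assume "e \<in> boundary G Y"
    then obtain p q where pq: "e \<in> edges G" "p \<in> Y" "q \<in> verts G" "q \<notin> Y" "ends G e = {p, q}"
      unfolding boundary_def edges_between_def by blast
    then obtain a where a: "a \<in> A" "(a, p) \<in> ?R" unfolding Y_def by blast
    show "e \<in> F"
    proof (rule ccontr)
      assume "e \<notin> F"
      with pq have "(p, q) \<in> adj G (edges G - F)" unfolding adj_def by blast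
      with a(2) have "(a, q) \<in> ?R" by (rule rtrancl_into_rtrancl)
      with a(1) pq(3) have "q \<in> Y" unfolding Y_def by blast
      with pq(4) show False ..
    qed
  qed
  moreover have "A \<subseteq> Y" using assms(2) unfolding Y_def by blast
  moreover have "Y \<inter> B = {}" using assms(1) unfolding Y_def separates_def by blast
  moreover have "Y \<subseteq> verts G" unfolding Y_def by blast
  ultimately show ?thesis using that by blast
qed

lemma separates_boundary:
  assumes "\<forall>e \<in> edges G. ends G e \<subseteq> verts G" "A \<subseteq> Y" "Y \<inter> B = {}"
  shows "separates G (boundary G Y) A B"
proof -
  have "v \<in> Y" if "(u, v) \<in> (adj G (edges G - boundary G Y))\<^sup>*" "u \<in> Y" for u v
    using that
  proof (induction rule: rtrancl_induct)
    case (step y z)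
    then obtain e where "e \<in> edges G - boundary G Y" "ends G e = {y, z}"
      unfolding adj_def by auto
    with step assms(1) show "z \<in> Y" unfolding boundary_def edges_between_def by blast
  qed simp
  with assms(2,3) show ?thesis unfolding separates_def by blast
qed

lemma mincut_le_boundary:
  assumes "\<forall>e \<in> edges G. ends G e \<subseteq> verts G" "A \<subseteq> Y" "Y \<inter> B = {}"
  shows "mincut G A B \<le> card (boundary G Y)"
proof -
  have "boundary G Y \<subseteq> edges G" unfolding boundary_def edges_between_def by blast
  then show ?thesis by (rule mincut_le_card[OF _ separates_boundary[OF assms]])
qed

lemma card_boundary_diff_le:
  assumes "finite (edges G)" "X \<subseteq> verts G" "Y \<subseteq> verts G"
    and "card (boundary G (X \<inter> Y) \<inter> boundary G X) \<le> card (edges_between G (X \<inter> Y) (X - Y))"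
  shows "card (boundary G (Y - X)) \<le> card (boundary G Y)"
proof -
  define D where "D = edges_between G (X \<inter> Y) (X - Y)"
  define C where "C = boundary G (X \<inter> Y) \<inter> boundary G X"
  have D: "D \<subseteq> boundary G Y"
    unfolding D_def using edges_between_split_subset_boundary[OF assms(2)] .
  \<comment> \<open>Edges leaving Y - X either leave Y without lying in X, or enter X \<inter> Y.\<close>
  have "boundary G (Y - X) \<subseteq> (boundary G Y - D) \<union> C"
  proof
    fix e assume "e \<in> boundary G (Y - X)"
    then obtain u w where uw: "e \<in> edges G" "u \<in> Y - X" "w \<in> verts G" "w \<notin> Y - X"
        "ends G e = {u, w}"
      unfolding boundary_def edges_between_def by auto
    show "e \<in> (boundary G Y - D) \<union> C"
    proof (cases "w \<in> Y")
      case True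
      with uw have "w \<in> X \<inter> Y" "u \<in> verts G - X" "ends G e = {w, u}"
        using assms(3) by (auto simp: insert_commute)
      with uw(1) have "e \<in> C"
        unfolding C_def boundary_def edges_between_def by blast
      then show ?thesis ..
    next
      case False
      have "\<not> ends G e \<subseteq> X" using uw by auto
      then have "e \<notin> D" unfolding D_def edges_between_def by auto
      with uw False show ?thesis unfolding boundary_def edges_between_def by auto
    qed
  qed
  then have "card (boundary G (Y - X)) \<le> card ((boundary G Y - D) \<union> C)"
    by (rule card_mono[rotated]) (simp add: C_def finite_boundary assms(1))
  also have "\<dots> \<le> card (boundary G Y - D) + card C"
    by (rule card_Un_le)
  also have "\<dots> = card (boundary G Y) - card D + card C"
    using card_Diff_subset[OF finite_subset[OF D finite_boundary[OF assms(1)]] D] by simp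
  also have "\<dots> \<le> card (boundary G Y)"
    using card_mono[OF finite_boundary[OF assms(1)] D] assms(4) unfolding C_def D_def by linarith
  finally show ?thesis .
qed

lemma card_boundary_union_le:
  assumes "finite (edges G)" "X \<subseteq> verts G" "Y \<subseteq> verts G"
    and "card (boundary G (X - Y) \<inter> boundary G X) \<le> card (edges_between G (X \<inter> Y) (X - Y))"
  shows "card (boundary G (Y \<union> X)) \<le> card (boundary G Y)"
proof -
  let ?Z = "verts G - Y"
  have "X \<inter> ?Z = X - Y" "X - ?Z = X \<inter> Y" using assms(2) by auto
  then have "card (boundary G (?Z - X)) \<le> card (boundary G ?Z)"
    using card_boundary_diff_le[OF assms(1,2), of ?Z] assms(4)
    by (simp add: edges_between_sym)
  moreover have "?Z - X = verts G - (Y \<union> X)" by blast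
  ultimately show ?thesis
    using assms(2,3) by (simp add: boundary_compl)
qed

lemma linked_uncross:
  assumes "finite (edges G)" "X \<subseteq> verts G" "Y \<subseteq> verts G" "linked c G X"
    and "card (boundary G Y) < c"
  obtains Y' where "Y' = Y - X \<or> Y' = Y \<union> X" "card (boundary G Y') \<le> card (boundary G Y)"
proof -
  let ?D = "edges_between G (X \<inter> Y) (X - Y)"
  have "card ?D \<le> card (boundary G Y)"
    by (rule card_mono[OF finite_boundary[OF assms(1)] edges_between_split_subset_boundary[OF assms(2)]])
  moreover have "card ?D \<ge> min (card (boundary G (X \<inter> Y) \<inter> boundary G X))
      (min (card (boundary G (X - Y) \<inter> boundary G X)) c)"
    using assms(4)[unfolded linked_def, rule_format, of "X \<inter> Y" "X - Y"] by auto
  ultimately consider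
      "card (boundary G (X \<inter> Y) \<inter> boundary G X) \<le> card ?D"
    | "card (boundary G (X - Y) \<inter> boundary G X) \<le> card ?D"
    using assms(5) by linarith
  then show ?thesis
  proof cases
    case 1
    then show ?thesis using that card_boundary_diff_le[OF assms(1-3)] by blast
  next
    case 2
    then show ?thesis using that card_boundary_union_le[OF assms(1-3)] by blast
  qed
qed

lemma blk_in_image_iff:
  assumes "X \<subseteq> Y \<or> X \<inter> Y = {}"
  shows "blk X u \<in> blk X ` Y \<longleftrightarrow> u \<in> Y"
proof
  assume "blk X u \<in> blk X ` Y"
  then obtain z where "z \<in> Y" "blk X u = blk X z" by blast
  with assms show "u \<in> Y"
    unfolding blk_def by (cases "u \<in> X"; cases "z \<in> X") auto
qed simp

lemma rtrancl_adj_contract: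
  assumes "(u, v) \<in> (adj G (edges G - F))\<^sup>*"
  shows "(blk X u, blk X v) \<in> (adj (contract G X) (edges (contract G X) - F))\<^sup>*"
  using assms
proof (induction rule: rtrancl_induct)
  case (step y z)
  then obtain e where e: "e \<in> edges G" "e \<notin> F" "ends G e = {y, z}" unfolding adj_def by auto
  show ?case
  proof (cases "{y, z} \<subseteq> X")
    case True
    then have "blk X y = blk X z" unfolding blk_def by auto
    with step.IH show ?thesis by simp
  next
    case False
    with e have "(blk X y, blk X z) \<in> adj (contract G X) (edges (contract G X) - F)"
      unfolding adj_def contract_def by auto
    with step.IH show ?thesis by (rule rtrancl_into_rtrancl)
  qed
qed simp

lemma separates_of_contract:
  assumes "separates (contract G X) F (blk X ` A) (blk X ` B)"
  shows "separates G F A B"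
  unfolding separates_def
proof (intro notI, elim bexE)
  fix a b assume "a \<in> A" "b \<in> B" "(a, b) \<in> (adj G (edges G - F))\<^sup>*"
  then have "blk X a \<in> blk X ` A" "blk X b \<in> blk X ` B"
    "(blk X a, blk X b) \<in> (adj (contract G X) (edges (contract G X) - F))\<^sup>*"
    by (auto intro: rtrancl_adj_contract)
  with assms show False unfolding separates_def by blast
qed

lemma mincut_le_mincut_contract:
  assumes "blk X ` A \<inter> blk X ` B = {}"
  shows "mincut G A B \<le> mincut (contract G X) (blk X ` A) (blk X ` B)"
proof (cases "A = {} \<or> B = {}")
  case False
  then have "blk X ` A \<noteq> {}" "blk X ` B \<noteq> {}" by auto
  then obtain F where F: "F \<subseteq> edges (contract G X)"
      "card F = mincut (contract G X) (blk X ` A) (blk X ` B)"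
      "separates (contract G X) F (blk X ` A) (blk X ` B)"
    by (rule mincut_obtain[OF _ _ assms])
  from F(1) have "F \<subseteq> edges G" unfolding contract_def by auto
  from mincut_le_card[OF this separates_of_contract[OF F(3)]] F(2) show ?thesis by simp
qed (auto simp: mincut_def)

lemma contract_ends_subset_verts:
  "multigraph G \<Longrightarrow> \<forall>e \<in> edges (contract G X). ends (contract G X) e \<subseteq> verts (contract G X)"
  unfolding multigraph_def contract_def by auto

lemma boundary_contract:
  assumes "multigraph G" "X \<subseteq> Y \<or> X \<inter> Y = {}"
  shows "boundary (contract G X) (blk X ` Y) = boundary G Y"
proof (intro equalityI subsetI)
  fix e assume e: "e \<in> boundary (contract G X) (blk X ` Y)"
  then have "e \<in> edges G" unfolding boundary_def edges_between_def contract_def by simp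
  with assms(1) obtain x y where xy: "ends G e = {x, y}" "{x, y} \<subseteq> verts G"
    unfolding multigraph_def card_2_iff by metis
  from e obtain \<beta> \<gamma> where "\<beta> \<in> blk X ` Y" "\<gamma> \<notin> blk X ` Y" "{blk X x, blk X y} = {\<beta>, \<gamma>}"
    unfolding boundary_def edges_between_def contract_def by (auto simp: xy)
  then have "x \<in> Y \<and> y \<notin> Y \<or> y \<in> Y \<and> x \<notin> Y"
    using blk_in_image_iff[OF assms(2)] by (auto simp: doubleton_eq_iff)
  with \<open>e \<in> edges G\<close> xy show "e \<in> boundary G Y"
    unfolding boundary_def edges_between_def by (auto simp: insert_commute)
next
  fix e assume "e \<in> boundary G Y"
  then obtain p q where pq: "e \<in> edges G" "p \<in> Y" "q \<in> verts G" "q \<notin> Y" "ends G e = {p, q}"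
    unfolding boundary_def edges_between_def by blast
  then have "\<not> ends G e \<subseteq> X" "blk X q \<notin> blk X ` Y"
    using assms(2) blk_in_image_iff[OF assms(2)] by auto
  with pq show "e \<in> boundary (contract G X) (blk X ` Y)"
    unfolding boundary_def edges_between_def contract_def by auto
qed

lemma mincut_contract_le_boundary:
  assumes "multigraph G" "X \<subseteq> Y \<or> X \<inter> Y = {}" "A \<subseteq> Y" "Y \<inter> B = {}"
  shows "mincut (contract G X) (blk X ` A) (blk X ` B) \<le> card (boundary G Y)"
proof -
  have "blk X ` Y \<inter> blk X ` B = {}"
    using assms(4) blk_in_image_iff[OF assms(2)] by blast
  with assms(3) show ?thesis
    using mincut_le_boundary[OF contract_ends_subset_verts[OF assms(1)]]
    by (metis boundary_contract[OF assms(1,2)] image_mono)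
qed

lemma mincut_contract_le:
  assumes G: "multigraph G" "X \<subseteq> verts G" "linked c G X"
    and AB: "A \<subseteq> verts G" "A \<inter> B = {}" "A \<inter> X = {}" "B \<inter> X = {}"
    and "mincut G A B < c"
  shows "mincut (contract G X) (blk X ` A) (blk X ` B) \<le> mincut G A B"
proof (cases "A = {} \<or> B = {}")
  case False
  have fin: "finite (edges G)" using G(1) unfolding multigraph_def by simp
  obtain F where F: "F \<subseteq> edges G" "card F = mincut G A B" "separates G F A B"
    by (rule mincut_obtain[of A B G]) (use False AB(2) in auto)
  obtain Y where Y: "Y \<subseteq> verts G" "A \<subseteq> Y" "Y \<inter> B = {}" "boundary G Y \<subseteq> F"
    using separates_obtain_boundary[OF F(3) AB(1)] .
  have "card (boundary G Y) \<le> mincut G A B"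
    using F(1,2) Y(4) fin by (metis card_mono finite_subset)
  moreover from calculation assms(8) have "card (boundary G Y) < c" by linarith
  then obtain Y' where Y': "Y' = Y - X \<or> Y' = Y \<union> X" "card (boundary G Y') \<le> card (boundary G Y)"
    by (rule linked_uncross[OF fin G(2) Y(1) G(3)])
  moreover have "mincut (contract G X) (blk X ` A) (blk X ` B) \<le> card (boundary G Y')"
    by (rule mincut_contract_le_boundary[OF G(1)]) (use Y Y'(1) AB in auto)
  ultimately show ?thesis by linarith
qed (auto simp: mincut_def)

lemma mincut_c_contract:
  assumes "multigraph G" "X \<subseteq> verts G" "linked c G X"
    and "A \<subseteq> verts G" "A \<inter> B = {}" "A \<inter> X = {}" "B \<inter> X = {}"
  shows "mincut_c c (contract G X) (blk X ` A) (blk X ` B) = mincut_c c G A B"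
proof -
  have "blk X ` A \<inter> blk X ` B = {}" using assms(5-7) by (auto simp: blk_def)
  then have "mincut G A B \<le> mincut (contract G X) (blk X ` A) (blk X ` B)"
    by (rule mincut_le_mincut_contract)
  with mincut_contract_le[OF assms] show ?thesis
    unfolding mincut_c_def by (cases "mincut G A B < c") auto
qed

theorem mainTheorem2:
  fixes c :: nat and G :: "('v, 'e) mgraph" and S T X :: "'v set"
  assumes "c \<ge> 1"
    and "multigraph G"
    and "verts G = S \<union> T" and "S \<inter> T = {}"
    and "X \<subseteq> S"
    and "linked c G X"
  shows "mimicking_network c G T (contract G X) (\<lambda>t. {t})"
proof -
  have XT: "X \<inter> T = {}" and XV: "X \<subseteq> verts G" using assms(3-5) by auto
  have blk_T: "blk X ` A = (\<lambda>t. {t}) ` A" if "A \<subseteq> T" for A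
    using that XT by (intro image_cong) (auto simp: blk_def)
  have "(\<lambda>t. {t}) ` T \<subseteq> verts (contract G X)"
    using blk_T[of T] image_mono[of T "verts G" "blk X"] assms(3) unfolding contract_def by auto
  moreover have "mincut_c c (contract G X) ((\<lambda>t. {t}) ` A) ((\<lambda>t. {t}) ` B) = mincut_c c G A B"
    if "A \<subseteq> T" "B \<subseteq> T" "A \<inter> B = {}" for A B
    using mincut_c_contract[OF assms(2) XV assms(6), of A B] that XT assms(3)
    by (auto simp: blk_T)
  ultimately show ?thesis unfolding mimicking_network_def by auto
qed

end
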